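(* For any solution $(w,F)\in X\times\mathbb R$ of the height equation, with $h=H+w$ and $\eta(q)=w(q,0)$, $$\int_{-M}^M\int_{-1}^0\frac{H_p^3w_q^2+(H_p+2h_p)w_p^2}{2h_p^2H_p^3}\,\Phi_p\Big(p;\frac1{F^2}\Big)\,dp\,dq+A\Big(\frac1{F^2}\Big)\int_{-M}^M\eta(q)\,dq\longrightarrow0\quad\text{as }M\to\infty.$$
   Context: Fix $\alpha\in(0,1)$, $\rho\in C^{2+\alpha}([-1,0])$ with $\rho>0$, $\rho_p\le0$, and $H\in C^{3+\alpha}([-1,0])$ with $H(-1)=0$, $H(0)=1$, $H_p>0$. Let $R=\mathbb R\times(-1,0)$ (coordinates $(q,p)$), $T=\mathbb R\times\{0\}$, $B=\mathbb R\times\{-1\}$. $(w,F)$ solves the height equation if $h=H+w$ satisfies $\big(-\frac{1+h_q^2}{2h_p^2}+\frac1{2H_p^2}\big)_p+\big(\frac{h_q}{h_p}\big)_q-\frac1{F^2}\rho_p(h-H)=0$ in $R$, $\frac{1+h_q^2}{2h_p^2}-\frac1{2H_p^2}+\frac1{F^2}\rho(h-1)=0$ on $T$, $h=0$ on $B$, and $0<\inf_R(H_p+w_p)<\infty$. $X$: $w\in C^{3+\alpha}(\overline R)$ of finite norm, even in $q$, with $w$ and derivatives of order $\le2$ tending to $0$ uniformly as $|q|\to\infty$, $w=0$ on $B$. For $\mu\ge0$, $\Phi(\cdot;\mu)$ solves $(\Phi_p/H_p^3)_p-\mu\rho_p\Phi=0$ on $(-1,0)$, $\Phi(-1)=0$,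 $\Phi_p(-1)=1$, and $A(\mu)=-\Phi_p(0;\mu)/H_p(0)^3+\mu\rho(0)\Phi(0;\mu)$. *)

theory Defs
  imports "HOL-Analysis.Analysis"
begin

definition holder_on :: "real \<Rightarrow> 'a::metric_space set \<Rightarrow> ('a \<Rightarrow> real) \<Rightarrow> bool" where
  "holder_on a S f \<longleftrightarrow> (\<exists>C. \<forall>x\<in>S. \<forall>y\<in>S. \<bar>f x - f y\<bar> \<le> C * dist x y powr a)"

abbreviation I01 :: "real set" where "I01 \<equiv> {-1..0}"

definition Rstrip :: "(real \<times> real) set" where
  "Rstrip = UNIV \<times> {-1<..<0}"

definition Rbar :: "(real \<times> real) set" where
  "Rbar = UNIV \<times> {-1..0}"

definition D1 :: "(real \<Rightarrow> real) \<Rightarrow> real \<Rightarrow> real" where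
  "D1 f x = vector_derivative f (at x within {-1..0})"

definition Dq :: "(real \<times> real \<Rightarrow> real) \<Rightarrow> real \<times> real \<Rightarrow> real" where
  "Dq f x = deriv (\<lambda>s. f (s, snd x)) (fst x)"

definition Dp :: "(real \<times> real \<Rightarrow> real) \<Rightarrow> real \<times> real \<Rightarrow> real" where
  "Dp f x = vector_derivative (\<lambda>s. f (fst x, s)) (at (snd x) within {-1..0})"

definition Cka_interval :: "nat \<Rightarrow> real \<Rightarrow> (real \<Rightarrow> real) \<Rightarrow> bool" where
  "Cka_interval k a f \<longleftrightarrow> (\<exists>d :: nat \<Rightarrow> real \<Rightarrow> real.
      (\<forall>x\<in>{-1..0}. d 0 x = f x) \<and>
      (\<forall>j<k. \<forall>x\<in>{-1..0}. (d j has_vector_derivative d (Suc j) x) (at x within {-1..0})) \<and>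
      holder_on a {-1..0} (d k))"

definition inX :: "real \<Rightarrow> (real \<times> real \<Rightarrow> real) \<Rightarrow> bool" where
  "inX a w \<longleftrightarrow> (\<exists>d :: nat \<Rightarrow> nat \<Rightarrow> real \<times> real \<Rightarrow> real.
      (\<forall>x\<in>Rbar. d 0 0 x = w x) \<and>
      (\<forall>i j. i + j < 3 \<longrightarrow> (\<forall>q p. p \<in> {-1..0} \<longrightarrow>
          ((\<lambda>s. d i j (s, p)) has_real_derivative d (Suc i) j (q, p)) (at q) \<and>
          ((\<lambda>s. d i j (q, s)) has_vector_derivative d i (Suc j) (q, p)) (at p within {-1..0}))) \<and>
      (\<forall>i j. i + j \<le> 3 \<longrightarrow> continuous_on Rbar (d i j) \<and> bounded (d i j ` Rbar)) \<and>
      (\<forall>i j. i + j = 3 \<longrightarrow> holder_on a Rbar (d i j)) \<and>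
      (\<forall>i j. i + j \<le> 2 \<longrightarrow> (\<forall>e>0. \<exists>K. \<forall>q p. p \<in> {-1..0} \<longrightarrow> K \<le> \<bar>q\<bar> \<longrightarrow> \<bar>d i j (q, p)\<bar> < e))) \<and>
    (\<forall>q p. p \<in> {-1..0} \<longrightarrow> w (-q, p) = w (q, p)) \<and>
    (\<forall>q. w (q, -1) = 0)"

text \<open>(w,F) solves the height equation, with h = H + w.  The factor 1/F^2 presupposes F \<noteq> 0.\<close>
definition height_eq ::
  "(real \<Rightarrow> real) \<Rightarrow> (real \<Rightarrow> real) \<Rightarrow> (real \<times> real \<Rightarrow> real) \<Rightarrow> real \<Rightarrow> bool" where
  "height_eq \<rho> H w F \<longleftrightarrow>
    (let h = (\<lambda>x. H (snd x) + w x); hq = Dq h; hp = Dp h in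
      F \<noteq> 0 \<and>
      (\<forall>x\<in>Rstrip.
         Dp (\<lambda>y. - (1 + (hq y)\<^sup>2) / (2 * (hp y)\<^sup>2) + 1 / (2 * (D1 H (snd y))\<^sup>2)) x
         + Dq (\<lambda>y. hq y / hp y) x
         - 1 / F\<^sup>2 * D1 \<rho> (snd x) * (h x - H (snd x)) = 0) \<and>
      (\<forall>q. (1 + (hq (q, 0))\<^sup>2) / (2 * (hp (q, 0))\<^sup>2) - 1 / (2 * (D1 H 0)\<^sup>2)
            + 1 / F\<^sup>2 * \<rho> 0 * (h (q, 0) - 1) = 0) \<and>
      (\<forall>q. h (q, -1) = 0) \<and>
      (\<exists>c>0. \<forall>x\<in>Rstrip. c \<le> hp x))"

definition Phi_sol :: "(real \<Rightarrow> real) \<Rightarrow> (real \<Rightarrow> real) \<Rightarrow> real \<Rightarrow> (real \<Rightarrow> real) \<Rightarrow> bool" where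
  "Phi_sol \<rho> H \<mu> \<phi> \<longleftrightarrow>
     (\<forall>p\<in>{-1..0}. \<phi> differentiable (at p within {-1..0})) \<and>
     (\<forall>p\<in>{-1<..<0}. ((\<lambda>s. D1 \<phi> s / (D1 H s) ^ 3) has_real_derivative \<mu> * D1 \<rho> p * \<phi> p) (at p)) \<and>
     \<phi> (-1) = 0 \<and> D1 \<phi> (-1) = 1"

definition Afun :: "(real \<Rightarrow> real) \<Rightarrow> (real \<Rightarrow> real) \<Rightarrow> (real \<Rightarrow> real \<Rightarrow> real) \<Rightarrow> real \<Rightarrow> real" where
  "Afun \<rho> H \<Phi> \<mu> = - D1 (\<Phi> \<mu>) 0 / (D1 H 0) ^ 3 + \<mu> * \<rho> 0 * \<Phi> \<mu> 0"

end

theory Submission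
  imports Defs
begin

text \<open>Write \<open>\<mu> = 1/F\<^sup>2\<close>, \<open>\<phi> = \<Phi>(\<cdot>;\<mu>)\<close>, \<open>a = -(1+h\<^sub>q\<^sup>2)/(2h\<^sub>p\<^sup>2) + 1/(2H\<^sub>p\<^sup>2)\<close> and
  \<open>b = h\<^sub>q/h\<^sub>p\<close>, so that the height equation is the conservation law \<open>a\<^sub>p + b\<^sub>q = \<mu>\<rho>\<^sub>p w\<close>.
  The integrand equals \<open>w\<^sub>p \<phi>\<^sub>p/H\<^sub>p\<^sup>3 - a \<phi>\<^sub>p\<close>, which by the conservation law and the ODE
  for \<open>\<phi>\<close> is \<open>-\<partial>\<^sub>p(a\<phi> - w \<phi>\<^sub>p/H\<^sub>p\<^sup>3) - \<phi> b\<^sub>q\<close>. Integrating in \<open>p\<close>, the bottom boundary term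
  vanishes and, by the Bernoulli condition \<open>a = \<mu>\<rho>(0)\<eta>\<close> on the top, the top one is \<open>A(\<mu>)\<eta>\<close>.
  What remains is \<open>-\<partial>\<^sub>q \<integral> \<phi> b dp\<close>, whose integral over \<open>[-M,M]\<close> tends to zero because
  \<open>w\<^sub>q \<rightarrow> 0\<close> uniformly while \<open>h\<^sub>p\<close> stays bounded below.\<close>

lemma D1_eqI:
  assumes "(f has_vector_derivative D) (at x within I01)" "x \<in> I01"
  shows "D1 f x = D"
  using assms vector_derivative_within_cbox[of "-1" 0 x f D] by (simp add: D1_def)

lemma Dp_eqI:
  assumes "((\<lambda>s. f (q, s)) has_vector_derivative D) (at p within I01)" "p \<in> I01"
  shows "Dp f (q, p) = D"
  using assms vector_derivative_within_cbox[of "-1" 0 p "\<lambda>s. f (q, s)" D] by (simp add: Dp_def)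

lemma Dq_eqI:
  assumes "((\<lambda>s. f (s, p)) has_real_derivative D) (at q)"
  shows "Dq f (q, p) = D"
  using assms DERIV_imp_deriv by (simp add: Dq_def)

lemma has_real_derivative_at_interior:
  "(f has_vector_derivative D) (at s within {l..u}) \<Longrightarrow> s \<in> {l<..<u} \<Longrightarrow>
    (f has_real_derivative D) (at s)"
  using at_within_Icc_at[of l s u] by (simp add: has_real_derivative_iff_has_vector_derivative)

lemma Cka_interval_has_D1:
  assumes "Cka_interval (Suc k) a f" "x \<in> I01"
  shows "(f has_vector_derivative D1 f x) (at x within I01)"
proof -
  obtain d where d0: "\<forall>x\<in>I01. d 0 x = f x"
    and d: "\<forall>j<Suc k. \<forall>x\<in>I01. (d j has_vector_derivative d (Suc j) x) (at x within I01)"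
    using assms(1) unfolding Cka_interval_def by blast
  have "(f has_vector_derivative d 1 x) (at x within I01)"
    using has_vector_derivative_transform[of x I01 f "d 0"] d d0 assms(2) by simp
  then show ?thesis using D1_eqI assms(2) by simp
qed

lemma Cka_interval_Suc_D1:
  assumes "Cka_interval (Suc k) a f"
  shows "Cka_interval k a (D1 f)"
proof -
  obtain d where d0: "\<forall>x\<in>I01. d 0 x = f x"
    and d: "\<forall>j<Suc k. \<forall>x\<in>I01. (d j has_vector_derivative d (Suc j) x) (at x within I01)"
    and hol: "holder_on a I01 (d (Suc k))"
    using assms unfolding Cka_interval_def by blast
  have "D1 f x = d 1 x" if x: "x \<in> I01" for x
  proof (rule D1_eqI[OF _ x])
    show "(f has_vector_derivative d 1 x) (at x within I01)"
      using has_vector_derivative_transform[of x I01 f "d 0"] d d0 x by simp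
  qed
  moreover have "\<forall>j<k. \<forall>x\<in>I01. (d (Suc j) has_vector_derivative d (Suc (Suc j)) x) (at x within I01)"
    using d by simp
  ultimately show ?thesis
    unfolding Cka_interval_def using hol by (intro exI[of _ "\<lambda>j. d (Suc j)"]) simp
qed

lemma Cka_interval_differentiable_on:
  assumes "Cka_interval (Suc k) a f"
  shows "f differentiable_on I01"
  using Cka_interval_has_D1[OF assms] differentiableI_vector unfolding differentiable_on_def by blast

lemma has_vector_derivative_eq_continuous_on_Icc:
  fixes f k :: "real \<Rightarrow> real"
  assumes "l < u"
    and f: "\<And>x. x \<in> {l..u} \<Longrightarrow> (f has_vector_derivative f' x) (at x within {l..u})"
    and k: "continuous_on {l..u} k"
    and eq: "\<And>x. x \<in> {l<..<u} \<Longrightarrow> f' x = k x"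
    and x: "x \<in> {l..u}"
  shows "f' x = k x"
proof -
  define \<Psi> where "\<Psi> t = f l + integral {l..t} k" for t
  have \<Psi>: "(\<Psi> has_vector_derivative k y) (at y within {l..u})" if "y \<in> {l..u}" for y
    unfolding \<Psi>_def using integral_has_vector_derivative[OF k that]
    by (auto intro!: derivative_eq_intros)
  have "continuous_on {l..u} \<Psi>" "continuous_on {l..u} f"
    using \<Psi> f has_vector_derivative_continuous continuous_on_eq_continuous_within by blast+
  then have cont: "continuous_on {l..u} (\<lambda>y. \<Psi> y - f y)"
    by (rule continuous_on_diff)
  have "\<Psi> y - f y = 0" if y: "y \<in> {l..u}" for y
  proof (rule has_derivative_zero_unique_strong_interval[OF _ cont _ _ y, of "{l, u}"])
    fix z assume z: "z \<in> {l..u} - {l, u}"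
    then have "((\<lambda>y. \<Psi> y - f y) has_vector_derivative k z - f' z) (at z within {l..u})"
      using \<Psi> f by (intro derivative_intros) auto
    then show "((\<lambda>y. \<Psi> y - f y) has_derivative (\<lambda>h. 0)) (at z within {l..u})"
      using eq[of z] z by (simp add: has_vector_derivative_def)
  qed (simp_all add: \<Psi>_def)
  then have "(f has_vector_derivative k x) (at x within {l..u})"
    using has_vector_derivative_transform[OF x _ \<Psi>[OF x], of f] by force
  then show ?thesis
    using vector_derivative_within_cbox[of l u x f] f[OF x] x \<open>l < u\<close> by (metis cbox_interval)
qed

lemma Phi_sol_has_D1:
  assumes "Phi_sol \<rho> H \<mu> \<phi>" "x \<in> I01"
  shows "(\<phi> has_vector_derivative D1 \<phi> x) (at x within I01)"
  using assms unfolding Phi_sol_def D1_def by (simp add: vector_derivative_works[symmetric])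

lemma Phi_sol_continuous:
  assumes "Phi_sol \<rho> H \<mu> \<phi>"
  shows "continuous_on I01 \<phi>"
  using Phi_sol_has_D1[OF assms] has_vector_derivative_continuous
    continuous_on_eq_continuous_within by blast

text \<open>In the interior \<open>\<phi>\<^sub>p/H\<^sub>p\<^sup>3\<close> differs from \<open>\<integral>\<^sub>-\<^sub>1\<^sup>p \<mu>\<rho>\<^sub>p\<phi>\<close> by a constant; the
  endpoint lemma carries this over to the one-sided derivatives at \<open>p = -1, 0\<close>.\<close>
lemma Phi_sol_flux_continuous:
  assumes \<phi>: "Phi_sol \<rho> H \<mu> \<phi>"
    and H': "continuous_on I01 (D1 H)" and H'_pos: "\<And>p. p \<in> I01 \<Longrightarrow> 0 < D1 H p"
    and \<rho>': "continuous_on I01 (D1 \<rho>)"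
  shows "continuous_on I01 (\<lambda>s. D1 \<phi> s / D1 H s ^ 3)"
proof -
  define g where "g s = D1 \<phi> s / D1 H s ^ 3" for s
  define G where "G t = integral {-1..t} (\<lambda>s. \<mu> * D1 \<rho> s * \<phi> s)" for t
  have "continuous_on I01 (\<lambda>s. \<mu> * D1 \<rho> s * \<phi> s)"
    using Phi_sol_continuous[OF \<phi>] \<rho>' by (intro continuous_intros)
  then have G: "(G has_vector_derivative \<mu> * D1 \<rho> x * \<phi> x) (at x within I01)" if "x \<in> I01" for x
    unfolding G_def using integral_has_vector_derivative that by blast
  then have G_cont: "continuous_on I01 G"
    using has_vector_derivative_continuous continuous_on_eq_continuous_within by blast
  have "\<exists>c. \<forall>x\<in>{-1<..<0}. g x - G x = c"
  proof (rule has_field_derivative_zero_constant)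
    fix x :: real assume x: "x \<in> {-1<..<0}"
    then have "(G has_real_derivative \<mu> * D1 \<rho> x * \<phi> x) (at x)"
      using G[of x] by (auto intro: has_real_derivative_at_interior)
    moreover have "(g has_real_derivative \<mu> * D1 \<rho> x * \<phi> x) (at x)"
      using \<phi> x unfolding Phi_sol_def g_def by blast
    ultimately have "((\<lambda>x. g x - G x) has_real_derivative 0) (at x)"
      using DERIV_diff by fastforce
    then show "((\<lambda>x. g x - G x) has_real_derivative 0) (at x within {-1<..<0})"
      by (rule has_field_derivative_at_within)
  qed simp
  then obtain c where c: "\<And>x. x \<in> {-1<..<0} \<Longrightarrow> g x = G x + c"
    by (metis add.commute diff_eq_eq)
  have "D1 \<phi> x = (G x + c) * D1 H x ^ 3" if x: "x \<in> I01" for x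
  proof (rule has_vector_derivative_eq_continuous_on_Icc[of "-1" 0 \<phi> "D1 \<phi>", OF _ _ _ _ x])
    show "continuous_on I01 (\<lambda>x. (G x + c) * D1 H x ^ 3)"
      using G_cont H' by (intro continuous_intros)
    fix y :: real assume y: "y \<in> {-1<..<0}"
    then have "D1 H y \<noteq> 0" using H'_pos[of y] by auto
    then show "D1 \<phi> y = (G y + c) * D1 H y ^ 3" using c[OF y] by (simp add: g_def field_simps)
  qed (use Phi_sol_has_D1[OF \<phi>] in auto)
  then have "g x = G x + c" if "x \<in> I01" for x
    using H'_pos[OF that] that by (simp add: g_def)
  moreover have "continuous_on I01 (\<lambda>x. G x + c)"
    using G_cont by (intro continuous_intros)
  ultimately show ?thesis
    unfolding g_def[symmetric] by (metis (no_types, lifting) continuous_on_eq)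
qed

lemma energy_density_eq:
  fixes Hp hp wp wq :: real
  assumes "Hp \<noteq> 0" "hp \<noteq> 0" "hp = Hp + wp"
  shows "(Hp ^ 3 * wq\<^sup>2 + (Hp + 2 * hp) * wp\<^sup>2) / (2 * hp\<^sup>2 * Hp ^ 3)
    = (1 + wq\<^sup>2) / (2 * hp\<^sup>2) - 1 / (2 * Hp\<^sup>2) + wp / Hp ^ 3"
proof -
  have wp: "wp = hp - Hp" using assms(3) by simp
  show ?thesis
    unfolding wp using assms(1,2) by (simp add: field_simps) algebra
qed

text \<open>Integration along a vertical line of the conservation law \<open>a' = r v - b\<close>,
  tested against a solution \<open>\<phi>\<close> of \<open>g' = r \<phi>\<close>: the terms \<open>r v \<phi>\<close> cancel in the derivative of
  \<open>a \<phi> - v g\<close>.\<close>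
lemma has_integral_conservation_law:
  fixes a b v \<phi> g r f :: "real \<Rightarrow> real"
  assumes "l \<le> u"
    and cont: "continuous_on {l..u} a" "continuous_on {l..u} v" "continuous_on {l..u} \<phi>"
      "continuous_on {l..u} g" "continuous_on {l..u} (\<lambda>s. \<phi> s * b s)"
    and a': "\<And>s. s \<in> {l<..<u} \<Longrightarrow> (a has_real_derivative r s * v s - b s) (at s)"
    and v': "\<And>s. s \<in> {l<..<u} \<Longrightarrow> (v has_real_derivative v' s) (at s)"
    and \<phi>': "\<And>s. s \<in> {l<..<u} \<Longrightarrow> (\<phi> has_real_derivative \<phi>' s) (at s)"
    and g': "\<And>s. s \<in> {l<..<u} \<Longrightarrow> (g has_real_derivative r s * \<phi> s) (at s)"
    and f: "\<And>s. s \<in> {l<..<u} \<Longrightarrow> f s = v' s * g s - a s * \<phi>' s"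
  shows "(f has_integral (a l * \<phi> l - v l * g l) - (a u * \<phi> u - v u * g u)
            - integral {l..u} (\<lambda>s. \<phi> s * b s)) {l..u}"
proof -
  define K where "K s = a s * \<phi> s - v s * g s" for s
  define K' where "K' s = a s * \<phi>' s - v' s * g s - \<phi> s * b s" for s
  have "(K' has_integral K u - K l) {l..u}"
  proof (rule fundamental_theorem_of_calculus_interior[OF \<open>l \<le> u\<close>])
    show "continuous_on {l..u} K" unfolding K_def using cont by (intro continuous_intros)
    fix s assume s: "s \<in> {l<..<u}"
    have "(K has_real_derivative
        (r s * v s - b s) * \<phi> s + \<phi>' s * a s - (v' s * g s + r s * \<phi> s * v s)) (at s)"
      unfolding K_def
      using DERIV_diff[OF DERIV_mult[OF a'[OF s] \<phi>'[OF s]] DERIV_mult[OF v'[OF s] g'[OF s]]] .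
    then show "(K has_vector_derivative K' s) (at s)"
      by (simp add: K'_def has_real_derivative_iff_has_vector_derivative[symmetric] algebra_simps)
  qed
  moreover have "((\<lambda>s. \<phi> s * b s) has_integral integral {l..u} (\<lambda>s. \<phi> s * b s)) {l..u}"
    using integrable_continuous_interval[OF cont(5)] by (rule integrable_integral)
  ultimately have "((\<lambda>s. - K' s - \<phi> s * b s) has_integral
      - (K u - K l) - integral {l..u} (\<lambda>s. \<phi> s * b s)) {l..u}"
    by (intro has_integral_diff has_integral_neg)
  then have "(f has_integral - (K u - K l) - integral {l..u} (\<lambda>s. \<phi> s * b s)) {l..u}"
    by (rule has_integral_spike_finite[of "{l, u}", rotated 2]) (use f in \<open>auto simp: K'_def\<close>)
  then show ?thesis by (simp add: K_def)
qed

lemma tendsto_integral_uniform_limit_zero: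
  fixes f :: "'a \<Rightarrow> real \<Rightarrow> real"
  assumes "uniform_limit {l..u} f (\<lambda>_. 0) F" and "\<And>x. continuous_on {l..u} (f x)"
  shows "((\<lambda>x. integral {l..u} (f x)) \<longlongrightarrow> 0) F"
proof (cases "F = bot")
  case False
  then obtain I J where I: "\<And>x. (f x has_integral I x) {l..u}"
    and "((\<lambda>_. 0) has_integral J) {l..u}" and "(I \<longlongrightarrow> J) F"
    using uniform_limit_integral[OF assms] by metis
  moreover have "I = (\<lambda>x. integral {l..u} (f x))"
    using I by (auto intro!: integral_unique[symmetric])
  ultimately show ?thesis by simp
qed simp

lemma tendsto_symmetric_integral_zero:
  fixes G G' \<eta> f :: "real \<Rightarrow> real"
  assumes G': "\<And>q. (G has_real_derivative G' q) (at q)" and G: "(G \<longlongrightarrow> 0) at_infinity"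
    and \<eta>: "continuous_on UNIV \<eta>" and f: "\<And>q. f q = - A * \<eta> q - G' q"
  shows "((\<lambda>M. integral {-M..M} f + A * integral {-M..M} \<eta>) \<longlongrightarrow> 0) at_top"
proof -
  have "integral {-M..M} f + A * integral {-M..M} \<eta> = G (-M) - G M" if "0 \<le> M" for M
  proof -
    have "(G' has_integral G M - G (-M)) {-M..M}"
    proof (rule fundamental_theorem_of_calculus)
      fix x :: real
      show "(G has_vector_derivative G' x) (at x within {-M..M})"
        using has_field_derivative_at_within[OF G'[of x]]
        by (simp add: has_real_derivative_iff_has_vector_derivative)
    qed (use that in simp)
    moreover have "(\<eta> has_integral integral {-M..M} \<eta>) {-M..M}"
      using integrable_continuous_interval[OF continuous_on_subset[OF \<eta>]] by blast
    ultimately have "((\<lambda>q. - A * \<eta> q - G' q) has_integral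
        - A * integral {-M..M} \<eta> - (G M - G (-M))) {-M..M}"
      by (intro has_integral_diff has_integral_mult_right)
    moreover have "f = (\<lambda>q. - A * \<eta> q - G' q)" using f by blast
    ultimately show ?thesis by (simp add: integral_unique)
  qed
  then have "\<forall>\<^sub>F M in at_top. G (-M) - G M = integral {-M..M} f + A * integral {-M..M} \<eta>"
    unfolding eventually_at_top_linorder by (intro exI[of _ 0]) simp
  moreover have "((\<lambda>M. G (-M) - G M) \<longlongrightarrow> 0 - 0) at_top"
    using filterlim_compose[OF tendsto_mono[OF at_bot_le_at_infinity G] filterlim_uminus_at_bot_at_top]
      tendsto_mono[OF at_top_le_at_infinity G] by (rule tendsto_diff)
  ultimately show ?thesis using Lim_transform_eventually by fastforce
qed

lemma continuous_on_Rbar_slice: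
  "continuous_on Rbar f \<Longrightarrow> continuous_on I01 (\<lambda>s. f (q, s))"
  by (rule continuous_on_compose2[of Rbar f]) (auto simp: Rbar_def intro!: continuous_intros)

lemma continuous_on_Rbar_snd:
  "continuous_on I01 f \<Longrightarrow> continuous_on Rbar (\<lambda>z. f (snd z))"
  by (rule continuous_on_compose2[of I01 f]) (auto simp: Rbar_def intro!: continuous_intros)

text \<open>\<open>d i j\<close> is the family of partial derivatives \<open>\<partial>\<^sub>q\<^sup>i \<partial>\<^sub>p\<^sup>j w\<close> from the definition of
  the space X.\<close>
locale height_solution =
  fixes \<rho> H :: "real \<Rightarrow> real" and F :: real and \<phi> :: "real \<Rightarrow> real"
    and w :: "real \<times> real \<Rightarrow> real" and d :: "nat \<Rightarrow> nat \<Rightarrow> real \<times> real \<Rightarrow> real"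
  assumes D1_\<rho>_cont: "continuous_on I01 (D1 \<rho>)"
    and H_has_D1: "\<And>p. p \<in> I01 \<Longrightarrow> (H has_vector_derivative D1 H p) (at p within I01)"
    and D1_H_differentiable: "D1 H differentiable_on I01"
    and D1_H_pos: "\<And>p. p \<in> I01 \<Longrightarrow> 0 < D1 H p"
    and H_top: "H 0 = 1"
    and phi_sol: "Phi_sol \<rho> H (1 / F\<^sup>2) \<phi>"
    and w_eq_d: "\<And>q p. p \<in> I01 \<Longrightarrow> w (q, p) = d 0 0 (q, p)"
    and d_has_Dq: "\<And>i j q p. i + j < 2 \<Longrightarrow> p \<in> I01 \<Longrightarrow>
      ((\<lambda>s. d i j (s, p)) has_real_derivative d (Suc i) j (q, p)) (at q)"
    and d_has_Dp: "\<And>i j q p. i + j < 2 \<Longrightarrow> p \<in> I01 \<Longrightarrow>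
      ((\<lambda>s. d i j (q, s)) has_vector_derivative d i (Suc j) (q, p)) (at p within I01)"
    and d_cont: "\<And>i j. i + j \<le> 2 \<Longrightarrow> continuous_on Rbar (d i j)"
    and d10_vanishes: "\<And>e. 0 < e \<Longrightarrow> \<exists>K. \<forall>q p. p \<in> I01 \<longrightarrow> K \<le> \<bar>q\<bar> \<longrightarrow> \<bar>d 1 0 (q, p)\<bar> < e"
    and w_bottom: "\<And>q. w (q, -1) = 0"
    and solves_height_eq: "height_eq \<rho> H w F"
begin

abbreviation \<mu> :: real where "\<mu> \<equiv> 1 / F\<^sup>2"

abbreviation h :: "real \<times> real \<Rightarrow> real" where "h \<equiv> \<lambda>x. H (snd x) + w x"

abbreviation hp :: "real \<Rightarrow> real \<Rightarrow> real" where "hp q p \<equiv> D1 H p + d 0 1 (q, p)"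

definition flux_p :: "real \<times> real \<Rightarrow> real" where
  "flux_p y = - (1 + (Dq h y)\<^sup>2) / (2 * (Dp h y)\<^sup>2) + 1 / (2 * (D1 H (snd y))\<^sup>2)"

definition flux_q :: "real \<times> real \<Rightarrow> real" where
  "flux_q y = Dq h y / Dp h y"

definition flux_q_Dq :: "real \<Rightarrow> real \<Rightarrow> real" where
  "flux_q_Dq q p = (d 2 0 (q, p) * hp q p - d 1 0 (q, p) * d 1 1 (q, p)) / (hp q p)\<^sup>2"

lemma D1_H_cont: "continuous_on I01 (D1 H)"
  using D1_H_differentiable by (rule differentiable_imp_continuous_on)

lemma w_has_Dq: "p \<in> I01 \<Longrightarrow> ((\<lambda>s. w (s, p)) has_real_derivative d 1 0 (q, p)) (at q)"
  using d_has_Dq[of 0 0 p q] w_eq_d by simp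

lemma w_has_Dp: "p \<in> I01 \<Longrightarrow> ((\<lambda>s. w (q, s)) has_vector_derivative d 0 1 (q, p)) (at p within I01)"
  using has_vector_derivative_transform[OF _ _ d_has_Dp[of 0 0 p q]] w_eq_d by simp

lemma Dq_w: "p \<in> I01 \<Longrightarrow> Dq w (q, p) = d 1 0 (q, p)"
  by (intro Dq_eqI w_has_Dq)

lemma Dp_w: "p \<in> I01 \<Longrightarrow> Dp w (q, p) = d 0 1 (q, p)"
  by (intro Dp_eqI w_has_Dp)

lemma Dq_h: "p \<in> I01 \<Longrightarrow> Dq h (q, p) = d 1 0 (q, p)"
  by (intro Dq_eqI) (auto intro!: derivative_eq_intros w_has_Dq)

lemma Dp_h: "p \<in> I01 \<Longrightarrow> Dp h (q, p) = hp q p"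
  by (intro Dp_eqI) (auto intro!: derivative_eq_intros w_has_Dp H_has_D1)

lemma d_slice_cont: "i + j \<le> 2 \<Longrightarrow> continuous_on I01 (\<lambda>s. d i j (q, s))"
  using d_cont continuous_on_Rbar_slice by blast

lemma hp_lower_bound: obtains c where "0 < c" "\<And>q p. p \<in> I01 \<Longrightarrow> c \<le> hp q p"
proof -
  obtain c where "0 < c" and c: "\<And>x. x \<in> Rstrip \<Longrightarrow> c \<le> Dp h x"
    using solves_height_eq unfolding height_eq_def Let_def by blast
  have "c \<le> hp q p" if p: "p \<in> I01" for q p
  proof (rule continuous_ge_on_closure[where S = "{-1<..<0}" and f = "hp q"])
    show "continuous_on (closure {-1<..<0}) (hp q)"
      using D1_H_cont d_slice_cont[of 0 1 q] by (auto intro!: continuous_intros)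
    show "p \<in> closure {-1<..<0::real}" using p by simp
    fix s :: real assume "s \<in> {-1<..<0}"
    then show "c \<le> hp q s" using c[of "(q, s)"] Dp_h[of s q] by (auto simp: Rstrip_def)
  qed
  then show thesis using that \<open>0 < c\<close> by blast
qed

lemma hp_pos: "p \<in> I01 \<Longrightarrow> 0 < hp q p"
  using hp_lower_bound by (metis order_less_le_trans)

lemma flux_balance:
  assumes "(q, p) \<in> Rstrip"
  shows "Dp flux_p (q, p) + Dq flux_q (q, p) = \<mu> * D1 \<rho> p * w (q, p)"
  using solves_height_eq assms unfolding height_eq_def Let_def flux_p_def[abs_def] flux_q_def[abs_def]
  by auto

lemma flux_p_top: "flux_p (q, 0) = \<mu> * \<rho> 0 * w (q, 0)"
proof -
  have "(1 + (Dq h (q, 0))\<^sup>2) / (2 * (Dp h (q, 0))\<^sup>2) - 1 / (2 * (D1 H 0)\<^sup>2)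
      + \<mu> * \<rho> 0 * (h (q, 0) - 1) = 0"
    using solves_height_eq unfolding height_eq_def Let_def by auto
  then show ?thesis
    using H_top by (simp add: flux_p_def algebra_simps diff_divide_distrib add_divide_distrib)
qed

lemma flux_q_has_Dq:
  assumes "p \<in> I01"
  shows "((\<lambda>s. d 1 0 (s, p) / hp s p) has_real_derivative flux_q_Dq q p) (at q)"
proof -
  have "((\<lambda>s. d 1 0 (s, p) / hp s p) has_real_derivative
      (d 2 0 (q, p) * hp q p - d 1 0 (q, p) * (0 + d 1 1 (q, p))) / (hp q p * hp q p)) (at q)"
    using d_has_Dq[of 1 0 p q] d_has_Dq[of 0 1 p q] hp_pos[OF assms, of q] assms
    by (intro derivative_intros) (auto simp: numeral_2_eq_2)
  then show ?thesis by (simp add: flux_q_Dq_def power2_eq_square)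
qed

lemma Dq_flux_q:
  assumes "p \<in> I01"
  shows "Dq flux_q (q, p) = flux_q_Dq q p"
proof -
  have "(\<lambda>s. flux_q (s, p)) = (\<lambda>s. d 1 0 (s, p) / hp s p)"
    using assms by (simp add: flux_q_def Dq_h Dp_h)
  with flux_q_has_Dq[OF assms] show ?thesis
    by (intro Dq_eqI) simp
qed

lemma flux_p_eq:
  "p \<in> I01 \<Longrightarrow> flux_p (q, p) = - (1 + (d 1 0 (q, p))\<^sup>2) / (2 * (hp q p)\<^sup>2) + 1 / (2 * (D1 H p)\<^sup>2)"
  by (simp add: flux_p_def Dq_h Dp_h)

lemma flux_p_cont: "continuous_on I01 (\<lambda>s. flux_p (q, s))"
proof -
  have "continuous_on I01
      (\<lambda>s. - (1 + (d 1 0 (q, s))\<^sup>2) / (2 * (hp q s)\<^sup>2) + 1 / (2 * (D1 H s)\<^sup>2))"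
    using D1_H_cont d_slice_cont[of 1 0 q] d_slice_cont[of 0 1 q] hp_pos D1_H_pos
    by (intro continuous_intros) (auto simp: less_imp_neq[symmetric])
  then show ?thesis by (rule continuous_on_eq) (simp add: flux_p_eq)
qed

lemma flux_p_has_derivative:
  assumes p: "p \<in> {-1<..<0}"
  shows "((\<lambda>s. flux_p (q, s)) has_real_derivative \<mu> * D1 \<rho> p * w (q, p) - flux_q_Dq q p) (at p)"
proof -
  have pI: "p \<in> I01" using p by auto
  have "(\<lambda>s. d i j (q, s)) differentiable (at p within I01)" if "i + j < 2" for i j
    using d_has_Dp[OF that pI] by (rule differentiableI_vector)
  moreover have "D1 H differentiable (at p within I01)"
    using D1_H_differentiable pI unfolding differentiable_on_def by blast
  ultimately have "(\<lambda>s. - (1 + (d 1 0 (q, s))\<^sup>2) / (2 * (hp q s)\<^sup>2) + 1 / (2 * (D1 H s)\<^sup>2))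
      differentiable (at p within I01)"
    using hp_pos[OF pI, of q] D1_H_pos[OF pI] by (intro derivative_intros) auto
  then obtain D where D: "((\<lambda>s. - (1 + (d 1 0 (q, s))\<^sup>2) / (2 * (hp q s)\<^sup>2) + 1 / (2 * (D1 H s)\<^sup>2))
      has_vector_derivative D) (at p within I01)"
    unfolding vector_derivative_works by blast
  have D: "((\<lambda>s. flux_p (q, s)) has_vector_derivative D) (at p within I01)"
    by (rule has_vector_derivative_transform[OF pI _ D]) (simp add: flux_p_eq)
  have "D = \<mu> * D1 \<rho> p * w (q, p) - flux_q_Dq q p"
    using flux_balance[of q p] Dp_eqI[OF D pI] Dq_flux_q[OF pI] p by (simp add: Rstrip_def)
  then show ?thesis
    using has_real_derivative_at_interior[OF D p] by simp
qed

lemma w_top_cont: "continuous_on UNIV (\<lambda>q. w (q, 0))"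
proof -
  have "continuous_on UNIV (\<lambda>q. d 0 0 (q, 0))"
    by (rule continuous_on_compose2[OF d_cont[of 0 0]]) (auto simp: Rbar_def intro!: continuous_intros)
  then show ?thesis by (simp add: w_eq_d)
qed

lemma flux_q_Dq_cont: "continuous_on Rbar (\<lambda>z. flux_q_Dq (fst z) (snd z))"
proof -
  have "continuous_on Rbar (\<lambda>z. (d 2 0 z * (D1 H (snd z) + d 0 1 z) - d 1 0 z * d 1 1 z)
      / (D1 H (snd z) + d 0 1 z)\<^sup>2)"
    using hp_pos continuous_on_Rbar_snd[OF D1_H_cont]
    by (intro continuous_intros d_cont) (auto simp: Rbar_def less_imp_neq[symmetric])
  then show ?thesis by (simp add: flux_q_Dq_def)
qed

abbreviation A :: real where "A \<equiv> - D1 \<phi> 0 / D1 H 0 ^ 3 + \<mu> * \<rho> 0 * \<phi> 0"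

abbreviation energy :: "real \<Rightarrow> real \<Rightarrow> real" where
  "energy q p \<equiv> ((D1 H p) ^ 3 * (Dq w (q, p))\<^sup>2 + (D1 H p + 2 * Dp h (q, p)) * (Dp w (q, p))\<^sup>2)
      / (2 * (Dp h (q, p))\<^sup>2 * (D1 H p) ^ 3) * D1 \<phi> p"

lemma energy_has_integral:
  "(energy q has_integral - A * w (q, 0) - integral I01 (\<lambda>p. \<phi> p * flux_q_Dq q p)) I01"
proof -
  define g where "g s = D1 \<phi> s / D1 H s ^ 3" for s
  have "(energy q has_integral (flux_p (q, -1) * \<phi> (-1) - w (q, -1) * g (-1))
      - (flux_p (q, 0) * \<phi> 0 - w (q, 0) * g 0) - integral I01 (\<lambda>p. \<phi> p * flux_q_Dq q p)) I01"
  proof (rule has_integral_conservation_law[where r = "\<lambda>s. \<mu> * D1 \<rho> s"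
        and v' = "\<lambda>s. d 0 1 (q, s)" and \<phi>' = "D1 \<phi>"])
    show "continuous_on I01 (\<lambda>s. w (q, s))"
      by (rule continuous_on_eq[OF d_slice_cont[of 0 0 q] w_eq_d[symmetric]]) simp
    show "continuous_on I01 g"
      unfolding g_def using Phi_sol_flux_continuous[OF phi_sol D1_H_cont D1_H_pos D1_\<rho>_cont] .
    show "continuous_on I01 (\<lambda>s. \<phi> s * flux_q_Dq q s)"
      using Phi_sol_continuous[OF phi_sol] continuous_on_Rbar_slice[OF flux_q_Dq_cont, of q]
      by (intro continuous_intros) auto
    fix s :: real assume s: "s \<in> {-1<..<0}"
    then have sI: "s \<in> I01" by auto
    show "((\<lambda>s. w (q, s)) has_real_derivative d 0 1 (q, s)) (at s)"
      using w_has_Dp[OF sI] s by (rule has_real_derivative_at_interior)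
    show "(\<phi> has_real_derivative D1 \<phi> s) (at s)"
      using Phi_sol_has_D1[OF phi_sol sI] s by (rule has_real_derivative_at_interior)
    show "(g has_real_derivative \<mu> * D1 \<rho> s * \<phi> s) (at s)"
      using phi_sol s unfolding Phi_sol_def g_def by blast
    have "D1 H s \<noteq> 0" "hp q s \<noteq> 0"
      using D1_H_pos[OF sI] hp_pos[OF sI, of q] by auto
    from energy_density_eq[OF this refl, of "d 1 0 (q, s)"]
    have "energy q s = ((1 + (d 1 0 (q, s))\<^sup>2) / (2 * (hp q s)\<^sup>2) - 1 / (2 * (D1 H s)\<^sup>2)
        + d 0 1 (q, s) / D1 H s ^ 3) * D1 \<phi> s"
      by (simp only: Dq_w[OF sI] Dp_w[OF sI] Dp_h[OF sI])
    also have "\<dots> = d 0 1 (q, s) * g s - flux_p (q, s) * D1 \<phi> s"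
      by (simp add: g_def flux_p_eq[OF sI] algebra_simps add_divide_distrib diff_divide_distrib)
    finally show "energy q s = d 0 1 (q, s) * g s - flux_p (q, s) * D1 \<phi> s" .
  next
    show "((\<lambda>s. flux_p (q, s)) has_real_derivative \<mu> * D1 \<rho> s * w (q, s) - flux_q_Dq q s) (at s)"
      if "s \<in> {-1<..<0}" for s
      using that by (rule flux_p_has_derivative)
  qed (simp_all add: flux_p_cont Phi_sol_continuous[OF phi_sol])
  moreover have "\<phi> (-1) = 0" using phi_sol unfolding Phi_sol_def by blast
  ultimately show ?thesis
    using w_bottom[of q] flux_p_top[of q] by (simp add: g_def algebra_simps)
qed

lemma phi_flux_q_integral_has_derivative:
  "((\<lambda>q. integral I01 (\<lambda>p. \<phi> p * (d 1 0 (q, p) / hp q p)))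
    has_real_derivative integral I01 (\<lambda>p. \<phi> p * flux_q_Dq q p)) (at q)"
proof -
  have "((\<lambda>x. integral (cbox (-1) 0) (\<lambda>p. \<phi> p * (d 1 0 (x, p) / hp x p)))
      has_field_derivative integral (cbox (-1) 0) (\<lambda>p. \<phi> p * flux_q_Dq q p)) (at q within UNIV)"
  proof (rule leibniz_rule_field_derivative)
    fix x p :: real assume "p \<in> cbox (-1) 0"
    then show "((\<lambda>x. \<phi> p * (d 1 0 (x, p) / hp x p)) has_field_derivative \<phi> p * flux_q_Dq x p)
        (at x within UNIV)"
      using DERIV_cmult[OF flux_q_has_Dq[of p x], of "\<phi> p"] by simp
  next
    fix x :: real
    have "continuous_on I01 (\<lambda>p. \<phi> p * (d 1 0 (x, p) / hp x p))"
      using Phi_sol_continuous[OF phi_sol] D1_H_cont d_slice_cont hp_pos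
      by (intro continuous_intros) (auto simp: less_imp_neq[symmetric])
    then show "(\<lambda>p. \<phi> p * (d 1 0 (x, p) / hp x p)) integrable_on cbox (-1) 0"
      by (simp add: integrable_continuous_interval)
  next
    have "continuous_on Rbar (\<lambda>z. \<phi> (snd z) * flux_q_Dq (fst z) (snd z))"
      using continuous_on_Rbar_snd[OF Phi_sol_continuous[OF phi_sol]] flux_q_Dq_cont
      by (intro continuous_intros)
    then show "continuous_on (UNIV \<times> cbox (-1) 0) (\<lambda>(x, p). \<phi> p * flux_q_Dq x p)"
      by (simp add: Rbar_def case_prod_beta)
  qed auto
  then show ?thesis by simp
qed

lemma phi_flux_q_integral_tendsto_zero:
  "((\<lambda>q. integral I01 (\<lambda>p. \<phi> p * (d 1 0 (q, p) / hp q p))) \<longlongrightarrow> 0) at_infinity"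
proof (rule tendsto_integral_uniform_limit_zero)
  obtain c where c: "0 < c" "\<And>q p. p \<in> I01 \<Longrightarrow> c \<le> hp q p"
    using hp_lower_bound by blast
  obtain B where B: "0 < B" "\<And>p. p \<in> I01 \<Longrightarrow> \<bar>\<phi> p\<bar> \<le> B"
    using compact_imp_bounded[OF compact_continuous_image[OF Phi_sol_continuous[OF phi_sol] compact_Icc]]
    by (auto simp: bounded_pos)
  show "uniform_limit I01 (\<lambda>q p. \<phi> p * (d 1 0 (q, p) / hp q p)) (\<lambda>_. 0) at_infinity"
  proof (rule uniform_limitI)
    fix e :: real assume "0 < e"
    then obtain K where K: "\<And>q p. p \<in> I01 \<Longrightarrow> K \<le> \<bar>q\<bar> \<Longrightarrow> \<bar>d 1 0 (q, p)\<bar> < e * c / B"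
      using d10_vanishes[of "e * c / B"] c B by auto
    have "\<bar>\<phi> p * (d 1 0 (q, p) / hp q p)\<bar> < e" if "p \<in> I01" "K \<le> \<bar>q\<bar>" for p q
    proof -
      have "\<bar>\<phi> p * (d 1 0 (q, p) / hp q p)\<bar> = \<bar>\<phi> p\<bar> * (\<bar>d 1 0 (q, p)\<bar> / hp q p)"
        using hp_pos[OF that(1), of q] by (simp add: abs_mult)
      also have "\<dots> \<le> B * (\<bar>d 1 0 (q, p)\<bar> / c)"
        using B c that hp_pos[OF that(1), of q] by (intro mult_mono frac_le) auto
      also have "\<dots> < B * (e * c / B / c)"
        using K[OF that] B c by (intro mult_strict_left_mono divide_strict_right_mono) auto
      finally show ?thesis using B c by simp
    qed
    then show "\<forall>\<^sub>F q in at_infinity. \<forall>p\<in>I01. dist (\<phi> p * (d 1 0 (q, p) / hp q p)) 0 < e"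
      unfolding eventually_at_infinity dist_real_def by (intro exI[of _ K]) auto
  qed
next
  show "continuous_on I01 (\<lambda>p. \<phi> p * (d 1 0 (q, p) / hp q p))" for q
    using Phi_sol_continuous[OF phi_sol] D1_H_cont d_slice_cont hp_pos
    by (intro continuous_intros) (auto simp: less_imp_neq[symmetric])
qed

theorem energy_identity_tendsto:
  "((\<lambda>M. integral {-M..M} (\<lambda>q. integral I01 (energy q)) + A * integral {-M..M} (\<lambda>q. w (q, 0)))
    \<longlongrightarrow> 0) at_top"
  using phi_flux_q_integral_has_derivative phi_flux_q_integral_tendsto_zero w_top_cont
  by (rule tendsto_symmetric_integral_zero) (intro integral_unique energy_has_integral)

end

lemma height_solution_exists:
  assumes \<rho>: "Cka_interval 2 \<alpha> \<rho>" and H: "Cka_interval 3 \<alpha> H" and "H 0 = 1"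
    and "\<forall>p\<in>I01. D1 H p > 0" and "Phi_sol \<rho> H (1 / F\<^sup>2) \<phi>"
    and "inX \<alpha> w" and "height_eq \<rho> H w F"
  shows "\<exists>d. height_solution \<rho> H F \<phi> w d"
proof -
  obtain d :: "nat \<Rightarrow> nat \<Rightarrow> real \<times> real \<Rightarrow> real" where
    d00: "\<forall>x\<in>Rbar. d 0 0 x = w x" and
    d_deriv: "\<forall>i j. i + j < 3 \<longrightarrow> (\<forall>q p. p \<in> I01 \<longrightarrow>
      ((\<lambda>s. d i j (s, p)) has_real_derivative d (Suc i) j (q, p)) (at q) \<and>
      ((\<lambda>s. d i j (q, s)) has_vector_derivative d i (Suc j) (q, p)) (at p within I01))" and
    d_cont: "\<forall>i j. i + j \<le> 3 \<longrightarrow> continuous_on Rbar (d i j) \<and> bounded (d i j ` Rbar)" and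
    d_vanish: "\<forall>i j. i + j \<le> 2 \<longrightarrow> (\<forall>e>0. \<exists>K. \<forall>q p. p \<in> I01 \<longrightarrow> K \<le> \<bar>q\<bar> \<longrightarrow> \<bar>d i j (q, p)\<bar> < e)" and
    w_bottom: "\<forall>q. w (q, -1) = 0"
    using \<open>inX \<alpha> w\<close> unfolding inX_def by blast
  have D1_H: "Cka_interval (Suc 1) \<alpha> (D1 H)"
    using Cka_interval_Suc_D1[of 2] H by (simp add: numeral_3_eq_3 numeral_2_eq_2)
  have D1_\<rho>: "Cka_interval (Suc 0) \<alpha> (D1 \<rho>)"
    using Cka_interval_Suc_D1[of 1] \<rho> by (simp add: numeral_2_eq_2)
  have "height_solution \<rho> H F \<phi> w d"
  proof
    show "continuous_on I01 (D1 \<rho>)"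
      using Cka_interval_differentiable_on[OF D1_\<rho>] by (rule differentiable_imp_continuous_on)
    show "(H has_vector_derivative D1 H p) (at p within I01)" if "p \<in> I01" for p
      using Cka_interval_has_D1[of 2] H that by (simp add: numeral_3_eq_3)
    show "D1 H differentiable_on I01"
      using D1_H by (rule Cka_interval_differentiable_on)
    show "w (q, p) = d 0 0 (q, p)" if "p \<in> I01" for q p
      using d00 that by (simp add: Rbar_def)
    show "\<exists>K. \<forall>q p. p \<in> I01 \<longrightarrow> K \<le> \<bar>q\<bar> \<longrightarrow> \<bar>d 1 0 (q, p)\<bar> < e" if "0 < e" for e
      using d_vanish that by simp
  qed (use assms d_deriv d_cont w_bottom in simp_all)
  then show ?thesis by blast
qed

theorem lemma4p3:
  fixes \<alpha> :: real and \<rho> H :: "real \<Rightarrow> real" and \<Phi> :: "real \<Rightarrow> real \<Rightarrow> real"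
    and w :: "real \<times> real \<Rightarrow> real" and F :: real
  assumes "0 < \<alpha>" "\<alpha> < 1"
    and "Cka_interval 2 \<alpha> \<rho>" "\<forall>p\<in>{-1..0}. \<rho> p > 0" "\<forall>p\<in>{-1..0}. D1 \<rho> p \<le> 0"
    and "Cka_interval 3 \<alpha> H" "H (-1) = 0" "H 0 = 1" "\<forall>p\<in>{-1..0}. D1 H p > 0"
    and "\<forall>\<mu>\<ge>0. Phi_sol \<rho> H \<mu> (\<Phi> \<mu>)"
    and "inX \<alpha> w"
    and "height_eq \<rho> H w F"
  shows "((\<lambda>M. integral {-M..M} (\<lambda>q. integral {-1..0} (\<lambda>p.
              ((D1 H p) ^ 3 * (Dq w (q, p))\<^sup>2
                 + (D1 H p + 2 * Dp (\<lambda>x. H (snd x) + w x) (q, p)) * (Dp w (q, p))\<^sup>2)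
              / (2 * (Dp (\<lambda>x. H (snd x) + w x) (q, p))\<^sup>2 * (D1 H p) ^ 3)
              * D1 (\<Phi> (1 / F\<^sup>2)) p))
          + Afun \<rho> H \<Phi> (1 / F\<^sup>2) * integral {-M..M} (\<lambda>q. w (q, 0)))
         \<longlongrightarrow> 0) at_top"
proof -
  let ?\<phi> = "\<Phi> (1 / F\<^sup>2)"
  have "Phi_sol \<rho> H (1 / F\<^sup>2) ?\<phi>"
    using \<open>\<forall>\<mu>\<ge>0. Phi_sol \<rho> H \<mu> (\<Phi> \<mu>)\<close> by simp
  then obtain d where "height_solution \<rho> H F ?\<phi> w d"
    using height_solution_exists assms(3,6,8,9,11,12) by blast
  then interpret height_solution \<rho> H F ?\<phi> w d .
  show ?thesis
    using energy_identity_tendsto by (simp add: Afun_def)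
qed

end
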